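(* Let $n\ge 3$ and let $A=(a_{ij})_{i,j=1}^n\in\mathbb{R}^{n\times n}$ be symmetric with $\max_{i,j}|a_{ij}|=1$. Suppose $A=LTL^T$, where $L=(l_{ij})_{i,j=1}^n$ is unit lower triangular with first column equal to $e_1$ (the first column of the identity matrix) and $|l_{ij}|\le 1$ for all $i,j$, and $T=(t_{ij})_{i,j=1}^n$ is symmetric tridiagonal. Then: (a) $|t_{11}|\le 1$, $|t_{21}|\le 1$, $|t_{22}|\le 1$, and $|l_{i2}\,t_{21}|\le 1$ for $3\le i\le n$; (b) $\left|l_{i,j-1}\,t_{j-1,j}+l_{ij}\,t_{jj}+l_{i,j+1}\,t_{j+1,j}\right|\le 2^{j-2}$ for all $2\le j<i\le n$; (c) $\left|l_{n,n-1}\,t_{n-1,n}+t_{nn}\right|\le 2^{n-2}$; (d) $|t_{i,i-1}|\le 2^{i-2}$ and $|t_{ii}|\le 2^{i-1}$ for $3\le i\le n$.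
   Context: This is the setting of Aasen's algorithm: for a symmetric matrix $A$, Aasen's algorithm computes a permutation matrix $P$ such that $PAP^T=LTL^T$ with $L$ and $T$ as described; the statement is applied with $A$ replaced by $PAP^T$ (which has the same maximal absolute entry). Entries $l_{ij}$ with $j>i$ are $0$ and $l_{ii}=1$. *)

theory Defs
  imports Main Complex_Main
begin

text \<open>Matrices of size n x n are represented as functions nat => nat => real,
  with indices ranging over 1..n (as in the paper).\<close>

definition mat_sym :: "nat \<Rightarrow> (nat \<Rightarrow> nat \<Rightarrow> real) \<Rightarrow> bool" where
  "mat_sym n A \<longleftrightarrow> (\<forall>i\<in>{1..n}. \<forall>j\<in>{1..n}. A i j = A j i)"

definition unit_lower_triangular :: "nat \<Rightarrow> (nat \<Rightarrow> nat \<Rightarrow> real) \<Rightarrow> bool" where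
  "unit_lower_triangular n L \<longleftrightarrow>
     (\<forall>i\<in>{1..n}. L i i = 1) \<and> (\<forall>i\<in>{1..n}. \<forall>j\<in>{1..n}. i < j \<longrightarrow> L i j = 0)"

definition tridiagonal :: "nat \<Rightarrow> (nat \<Rightarrow> nat \<Rightarrow> real) \<Rightarrow> bool" where
  "tridiagonal n T \<longleftrightarrow>
     (\<forall>i\<in>{1..n}. \<forall>j\<in>{1..n}. Suc i < j \<or> Suc j < i \<longrightarrow> T i j = 0)"

definition LTLt :: "nat \<Rightarrow> (nat \<Rightarrow> nat \<Rightarrow> real) \<Rightarrow> (nat \<Rightarrow> nat \<Rightarrow> real) \<Rightarrow> nat \<Rightarrow> nat \<Rightarrow> real" where
  "LTLt n L T i j = (\<Sum>k=1..n. \<Sum>m=1..n. L i k * T k m * L j m)"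

end

theory Submission
  imports Defs
begin

text \<open>Put \<open>H = L T\<close>, so that \<open>A = H L\<^sup>T\<close>. Because \<open>L\<close> is unit lower triangular with first
  column \<open>e\<^sub>1\<close>, for \<open>j \<ge> 2\<close> column \<open>j\<close> of \<open>A\<close> is column \<open>j\<close> of \<open>H\<close> plus \<open>l\<^sub>j\<^sub>m\<close> times column \<open>m\<close>
  of \<open>H\<close>, summed over \<open>2 \<le> m < j\<close>. So the columns of \<open>H\<close> arise from those of \<open>A\<close> by forward
  substitution with multipliers of modulus at most 1, and their entries grow at most like
  \<open>1 + (1 + 2 + \<dots> + 2\<^sup>j\<^sup>-\<^sup>3) = 2\<^sup>j\<^sup>-\<^sup>2\<close>; column 1 of \<open>H\<close> equals that of \<open>A\<close>. As \<open>T\<close> is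
  tridiagonal, every entry of \<open>H\<close> is one of the three-term expressions of the statement, and
  the bounds on \<open>T\<close> are read off from the entries of \<open>H\<close> on and just above the diagonal.\<close>

definition mat_mul :: "nat \<Rightarrow> (nat \<Rightarrow> nat \<Rightarrow> real) \<Rightarrow> (nat \<Rightarrow> nat \<Rightarrow> real) \<Rightarrow> nat \<Rightarrow> nat \<Rightarrow> real"
  where "mat_mul n X Y i j = (\<Sum>k=1..n. X i k * Y k j)"

lemma LTLt_eq_mat_mul: "LTLt n L T i j = (\<Sum>m=1..n. mat_mul n L T i m * L j m)"
proof -
  have "LTLt n L T i j = (\<Sum>m=1..n. \<Sum>k=1..n. L i k * T k m * L j m)"
    unfolding LTLt_def by (rule sum.swap)
  then show ?thesis by (simp add: mat_mul_def sum_distrib_right)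
qed

lemma abs_le_Max_abs_entries:
  fixes A :: "nat \<Rightarrow> nat \<Rightarrow> real"
  assumes "i \<in> {1..n}" "j \<in> {1..n}"
  shows "\<bar>A i j\<bar> \<le> Max {\<bar>A i j\<bar> | i j. i \<in> {1..n} \<and> j \<in> {1..n}}"
proof (rule Max_ge)
  have "{\<bar>A i j\<bar> | i j. i \<in> {1..n} \<and> j \<in> {1..n}} = (\<lambda>(i, j). \<bar>A i j\<bar>) ` ({1..n} \<times> {1..n})"
    by force
  then show "finite {\<bar>A i j\<bar> | i j. i \<in> {1..n} \<and> j \<in> {1..n}}" by simp
qed (use assms in blast)

lemma sum_power2_from_2: "2 \<le> j \<Longrightarrow> (\<Sum>k=2..<j. (2::real) ^ (k - 2)) = 2 ^ (j - 2) - 1"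
proof (induction j rule: dec_induct)
  case (step m)
  then obtain k where "m = k + 2" by (metis add.commute le_Suc_ex)
  with step show ?case by simp
qed simp

lemma forward_substitution_growth:
  fixes h :: "nat \<Rightarrow> real"
  assumes rhs: "\<And>j. j \<in> {2..n} \<Longrightarrow> \<bar>h j + (\<Sum>m=2..<j. h m * L j m)\<bar> \<le> 1"
    and mult: "\<And>j m. j \<in> {2..n} \<Longrightarrow> m \<in> {2..<j} \<Longrightarrow> \<bar>L j m\<bar> \<le> 1"
    and j: "j \<in> {2..n}"
  shows "\<bar>h j\<bar> \<le> 2 ^ (j - 2)"
  using j
proof (induction j rule: less_induct)
  case (less j)
  have "\<bar>\<Sum>m=2..<j. h m * L j m\<bar> \<le> (\<Sum>m=2..<j. \<bar>h m * L j m\<bar>)"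
    by (rule sum_abs)
  also have "\<dots> = (\<Sum>m=2..<j. \<bar>h m\<bar> * \<bar>L j m\<bar>)"
    by (simp add: abs_mult)
  also have "\<dots> \<le> (\<Sum>m=2..<j. 2 ^ (m - 2))"
  proof (rule sum_mono)
    fix m assume m: "m \<in> {2..<j}"
    have "\<bar>h m\<bar> \<le> 2 ^ (m - 2)" using less.IH less.prems m by auto
    moreover have "\<bar>L j m\<bar> \<le> 1" using mult less.prems m .
    ultimately show "\<bar>h m\<bar> * \<bar>L j m\<bar> \<le> 2 ^ (m - 2)"
      using mult_mono[of "\<bar>h m\<bar>" "2 ^ (m - 2)" "\<bar>L j m\<bar>" 1] by simp
  qed
  also have "\<dots> = 2 ^ (j - 2) - 1" using less.prems by (simp add: sum_power2_from_2)
  finally show ?case using rhs[OF less.prems] by linarith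
qed

lemma unit_lower_triangularD:
  assumes "unit_lower_triangular n L"
  shows unit_lower_triangular_diag: "i \<in> {1..n} \<Longrightarrow> L i i = 1"
    and unit_lower_triangular_upper: "i \<in> {1..n} \<Longrightarrow> j \<in> {1..n} \<Longrightarrow> i < j \<Longrightarrow> L i j = 0"
  using assms unfolding unit_lower_triangular_def by blast+

lemma tridiagonal_outside_band:
  "tridiagonal n T \<Longrightarrow> k \<in> {1..n} \<Longrightarrow> j \<in> {1..n} \<Longrightarrow> Suc k < j \<or> Suc j < k \<Longrightarrow> T k j = 0"
  unfolding tridiagonal_def by blast

lemma sum_unit_lower_row_first:
  assumes "unit_lower_triangular n L" "1 \<le> n"
  shows "(\<Sum>m=1..n. h m * L 1 m) = h 1"
proof -
  have "(\<Sum>m=1..n. h m * L 1 m) = (\<Sum>m\<in>{1}. h m * L 1 m)"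
    using assms by (intro sum.mono_neutral_right) (auto simp: unit_lower_triangular_def)
  then show ?thesis using assms by (simp add: unit_lower_triangular_def)
qed

lemma sum_unit_lower_row:
  assumes L: "unit_lower_triangular n L" and j: "j \<in> {2..n}" and "L j 1 = 0"
  shows "(\<Sum>m=1..n. h m * L j m) = h j + (\<Sum>m=2..<j. h m * L j m)"
proof -
  have "(\<Sum>m=1..n. h m * L j m) = (\<Sum>m\<in>insert j {2..<j}. h m * L j m)"
  proof (rule sum.mono_neutral_right)
    show "\<forall>m\<in>{1..n} - insert j {2..<j}. h m * L j m = 0"
    proof (intro ballI)
      fix m assume m: "m \<in> {1..n} - insert j {2..<j}"
      show "h m * L j m = 0"
      proof (cases "m = 1")
        case True
        then show ?thesis using \<open>L j 1 = 0\<close> by simp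
      next
        case False
        then have "L j m = 0" using m j by (intro unit_lower_triangular_upper[OF L]) auto
        then show ?thesis by simp
      qed
    qed
  qed (use j in auto)
  then show ?thesis using unit_lower_triangular_diag[OF L] j by simp
qed

lemma mat_mul_tridiagonal_band:
  assumes "tridiagonal n T" "j \<in> {1..n}" "S \<subseteq> {1..n}"
    and "\<And>k. k \<in> {1..n} \<Longrightarrow> k \<notin> S \<Longrightarrow> Suc k < j \<or> Suc j < k"
  shows "mat_mul n X T i j = (\<Sum>k\<in>S. X i k * T k j)"
  unfolding mat_mul_def
proof (rule sum.mono_neutral_right)
  show "\<forall>k\<in>{1..n} - S. X i k * T k j = 0"
    using assms tridiagonal_outside_band[OF assms(1)] by simp
qed (use assms in auto)

lemma mat_mul_tridiagonal_first:
  assumes "tridiagonal n T" "2 \<le> n"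
  shows "mat_mul n X T i 1 = X i 1 * T 1 1 + X i 2 * T 2 1"
proof -
  have "mat_mul n X T i 1 = (\<Sum>k\<in>{1, 2}. X i k * T k 1)"
    using assms by (intro mat_mul_tridiagonal_band) auto
  then show ?thesis by simp
qed

lemma mat_mul_tridiagonal_col:
  assumes "tridiagonal n T" "2 \<le> j" "j < n"
  shows "mat_mul n X T i j = X i (j - 1) * T (j - 1) j + X i j * T j j + X i (j + 1) * T (j + 1) j"
proof -
  have "mat_mul n X T i j = (\<Sum>k\<in>{j - 1, j, j + 1}. X i k * T k j)"
    using assms by (intro mat_mul_tridiagonal_band) auto
  moreover have "j - 1 \<notin> {j, j + 1}" "j \<notin> {j + 1}" using assms by auto
  ultimately show ?thesis by (simp add: add.assoc)
qed

lemma mat_mul_tridiagonal_last: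
  assumes "tridiagonal n T" "2 \<le> n"
  shows "mat_mul n X T i n = X i (n - 1) * T (n - 1) n + X i n * T n n"
proof -
  have "mat_mul n X T i n = (\<Sum>k\<in>{n - 1, n}. X i k * T k n)"
    using assms by (intro mat_mul_tridiagonal_band) auto
  then show ?thesis using assms by simp
qed

lemma mat_mul_unit_lower_tridiagonal_diag:
  assumes L: "unit_lower_triangular n L" and T: "tridiagonal n T" and i: "i \<in> {2..n}"
  shows "mat_mul n L T i i = L i (i - 1) * T (i - 1) i + T i i"
proof (cases "i = n")
  case True
  then show ?thesis using mat_mul_tridiagonal_last[OF T] L i by (simp add: unit_lower_triangular_def)
next
  case False
  then show ?thesis using mat_mul_tridiagonal_col[OF T, of i] L i
    by (simp add: unit_lower_triangular_def)
qed

lemma mat_mul_unit_lower_tridiagonal_super: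
  assumes L: "unit_lower_triangular n L" and T: "tridiagonal n T" and j: "j \<in> {2..n}"
  shows "mat_mul n L T (j - 1) j = T (j - 1) j"
proof -
  have "mat_mul n L T (j - 1) j = (\<Sum>k\<in>{j - 1}. L (j - 1) k * T k j)"
    unfolding mat_mul_def
  proof (rule sum.mono_neutral_right)
    show "\<forall>k\<in>{1..n} - {j - 1}. L (j - 1) k * T k j = 0"
    proof (intro ballI)
      fix k assume k: "k \<in> {1..n} - {j - 1}"
      show "L (j - 1) k * T k j = 0"
      proof (cases "k < j - 1")
        case True
        then have "T k j = 0" using k j by (intro tridiagonal_outside_band[OF T]) auto
        then show ?thesis by simp
      next
        case False
        then have "L (j - 1) k = 0" using k j by (intro unit_lower_triangular_upper[OF L]) auto
        then show ?thesis by simp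
      qed
    qed
  qed (use j in auto)
  moreover have "L (j - 1) (j - 1) = 1" using j by (intro unit_lower_triangular_diag[OF L]) auto
  ultimately show ?thesis by simp
qed

locale aasen_factorization =
  fixes n :: nat and L T :: "nat \<Rightarrow> nat \<Rightarrow> real"
  assumes n3: "3 \<le> n"
    and entry_bound: "\<And>i j. i \<in> {1..n} \<Longrightarrow> j \<in> {1..n} \<Longrightarrow> \<bar>LTLt n L T i j\<bar> \<le> 1"
    and Lunit: "unit_lower_triangular n L"
    and Lcol1: "\<And>i. i \<in> {2..n} \<Longrightarrow> L i 1 = 0"
    and Lbnd: "\<And>i j. i \<in> {1..n} \<Longrightarrow> j \<in> {1..n} \<Longrightarrow> \<bar>L i j\<bar> \<le> 1"
    and Tsym: "mat_sym n T"
    and Ttri: "tridiagonal n T"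
begin

lemma first_column_entry_bound:
  assumes "i \<in> {1..n}"
  shows "\<bar>L i 1 * T 1 1 + L i 2 * T 2 1\<bar> \<le> 1"
proof -
  have "LTLt n L T i 1 = mat_mul n L T i 1"
    using sum_unit_lower_row_first[OF Lunit] n3 by (simp add: LTLt_eq_mat_mul)
  also have "\<dots> = L i 1 * T 1 1 + L i 2 * T 2 1"
    using mat_mul_tridiagonal_first[OF Ttri] n3 by simp
  finally show ?thesis using entry_bound[of i 1] assms n3 by simp
qed

lemma LT_column_growth:
  assumes "i \<in> {1..n}" "j \<in> {2..n}"
  shows "\<bar>mat_mul n L T i j\<bar> \<le> 2 ^ (j - 2)"
proof (rule forward_substitution_growth[where L = L and n = n])
  fix j assume "j \<in> {2..n}"
  then show "\<bar>mat_mul n L T i j + (\<Sum>m=2..<j. mat_mul n L T i m * L j m)\<bar> \<le> 1"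
    using entry_bound[of i j] assms(1) Lcol1 sum_unit_lower_row[OF Lunit]
    by (simp add: LTLt_eq_mat_mul)
qed (use Lbnd assms in auto)

lemma T_leading_entries_bound:
  "\<bar>T 1 1\<bar> \<le> 1 \<and> \<bar>T 2 1\<bar> \<le> 1 \<and> \<bar>T 2 2\<bar> \<le> 1 \<and> (\<forall>i\<in>{3..n}. \<bar>L i 2 * T 2 1\<bar> \<le> 1)"
proof (intro conjI ballI)
  show "\<bar>T 1 1\<bar> \<le> 1"
    using first_column_entry_bound[of 1] n3
      unit_lower_triangular_diag[OF Lunit, of 1] unit_lower_triangular_upper[OF Lunit, of 1 2]
    by simp
  show "\<bar>T 2 1\<bar> \<le> 1"
    using first_column_entry_bound[of 2] unit_lower_triangular_diag[OF Lunit, of 2] Lcol1[of 2] n3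
    by simp
  show "\<bar>T 2 2\<bar> \<le> 1"
    using LT_column_growth[of 2 2] mat_mul_unit_lower_tridiagonal_diag[OF Lunit Ttri, of 2] Lcol1[of 2] n3
    by simp
  show "\<bar>L i 2 * T 2 1\<bar> \<le> 1" if "i \<in> {3..n}" for i
    using first_column_entry_bound[of i] Lcol1[of i] that by simp
qed

lemma LT_entry_bound:
  assumes "2 \<le> j" "j < i" "i \<le> n"
  shows "\<bar>L i (j - 1) * T (j - 1) j + L i j * T j j + L i (j + 1) * T (j + 1) j\<bar> \<le> 2 ^ (j - 2)"
  using LT_column_growth[of i j] mat_mul_tridiagonal_col[OF Ttri, of j] assms by simp

lemma LT_last_diagonal_bound: "\<bar>L n (n - 1) * T (n - 1) n + T n n\<bar> \<le> 2 ^ (n - 2)"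
  using LT_column_growth[of n n] mat_mul_unit_lower_tridiagonal_diag[OF Lunit Ttri, of n] n3 by simp

lemma T_entry_growth:
  assumes i: "i \<in> {3..n}"
  shows "\<bar>T i (i - 1)\<bar> \<le> 2 ^ (i - 2) \<and> \<bar>T i i\<bar> \<le> 2 ^ (i - 1)"
proof
  have i1: "i - 1 \<in> {1..n}" and i2: "i \<in> {2..n}" using i by auto
  have super: "T (i - 1) i = mat_mul n L T (i - 1) i"
    using mat_mul_unit_lower_tridiagonal_super[OF Lunit Ttri i2] by simp
  have "T i (i - 1) = T (i - 1) i" using i1 i2 Tsym unfolding mat_sym_def by auto
  then show "\<bar>T i (i - 1)\<bar> \<le> 2 ^ (i - 2)" using LT_column_growth[OF i1 i2] super by simp
  have "\<bar>L i (i - 1) * T (i - 1) i\<bar> \<le> 1 * 2 ^ (i - 2)"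
    unfolding abs_mult
    using Lbnd[of i "i - 1"] i1 i2 super LT_column_growth[OF i1 i2] by (intro mult_mono) auto
  moreover have "\<bar>L i (i - 1) * T (i - 1) i + T i i\<bar> \<le> 2 ^ (i - 2)"
    using LT_column_growth[of i i] mat_mul_unit_lower_tridiagonal_diag[OF Lunit Ttri i2] i2 by simp
  moreover have "(2::real) ^ (i - 2) + 2 ^ (i - 2) = 2 ^ (i - 1)"
    using i by (simp add: power_Suc[symmetric] Suc_diff_Suc numeral_2_eq_2)
  ultimately show "\<bar>T i i\<bar> \<le> 2 ^ (i - 1)" by linarith
qed

end

theorem lemma1:
  fixes n :: nat and A L T :: "nat \<Rightarrow> nat \<Rightarrow> real"
  assumes n3: "n \<ge> 3"
    and Asym: "mat_sym n A"
    and Amax: "Max {\<bar>A i j\<bar> | i j. i \<in> {1..n} \<and> j \<in> {1..n}} = 1"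
    and fact: "\<forall>i\<in>{1..n}. \<forall>j\<in>{1..n}. A i j = LTLt n L T i j"
    and Lunit: "unit_lower_triangular n L"
    and Lcol1: "\<forall>i\<in>{2..n}. L i 1 = 0"
    and Lbnd: "\<forall>i\<in>{1..n}. \<forall>j\<in>{1..n}. \<bar>L i j\<bar> \<le> 1"
    and Tsym: "mat_sym n T"
    and Ttri: "tridiagonal n T"
  shows "(\<bar>T 1 1\<bar> \<le> 1 \<and> \<bar>T 2 1\<bar> \<le> 1 \<and> \<bar>T 2 2\<bar> \<le> 1 \<and>
          (\<forall>i\<in>{3..n}. \<bar>L i 2 * T 2 1\<bar> \<le> 1))
       \<and> (\<forall>i j. 2 \<le> j \<and> j < i \<and> i \<le> n \<longrightarrow>
            \<bar>L i (j - 1) * T (j - 1) j + L i j * T j j + L i (j + 1) * T (j + 1) j\<bar> \<le> 2 ^ (j - 2))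
       \<and> \<bar>L n (n - 1) * T (n - 1) n + T n n\<bar> \<le> 2 ^ (n - 2)
       \<and> (\<forall>i\<in>{3..n}. \<bar>T i (i - 1)\<bar> \<le> 2 ^ (i - 2) \<and> \<bar>T i i\<bar> \<le> 2 ^ (i - 1))"
proof -
  interpret aasen_factorization n L T
  proof
    fix i j assume "i \<in> {1..n}" "j \<in> {1..n}"
    then show "\<bar>LTLt n L T i j\<bar> \<le> 1"
      using abs_le_Max_abs_entries[of i n j A] fact Amax by simp
  qed (use assms in auto)
  show ?thesis using T_leading_entries_bound LT_entry_bound LT_last_diagonal_bound T_entry_growth by blast
qed

end
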